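(* Let $G$ be any weighted finite graph with $N$ vertices. Then for each $1\leq k\leq N$, \[ \overline{h}(k)\leq 1-h(k). \] Moreover: (i) $\overline{h}(k)=1$ if and only if $G$ has at least $k$ connected components each of which is bipartite. (ii) If $G$ is bipartite, then $h(k)+\overline{h}(k)=1$ for each $1\leq k\leq N$. (iii) If $h(k)+\overline{h}(k)=1$, then for a $k$-sub-bipartition $\{(V_{2i-1},V_{2i})\}_{i=1}^k$ attaining the maximum in the definition of $\overline{h}(k)$, and an index $i_0$ with $\phi(V_{2i_0-1}\cup V_{2i_0})=\max_{1\leq i\leq k}\phi(V_{2i-1}\cup V_{2i})$, one has $|E(V_{2i_0-1},V_{2i_0-1})|=|E(V_{2i_0},V_{2i_0})|=0$.
   Context: $G=(V,E,w)$ is a finite undirected graph without self-loops, with $N=|V|$; each edge $\{u,v\}$ carries a positive symmetric weight $w_{uv}$, and $w_{uv}=0$ for non-edges. $d_u=\sum_v w_{uv}$ (implicitly positive). For $A,B\subseteq V$, $|E(A,B)|:=\sum_{u\in A,v\in B}w_{uv}$, $\mathrm{vol}(A):=\sum_{u\in A}d_u$, $\overline{A}=V\setminus A$. For nonempty $S$, $\phi(S):=|E(S,\overline{S})|/\mathrm{vol}(S)$; $h(k):=\min\max_{1\leq i\leq k}\phi(S_i)$ over all collections of $k$ nonempty pairwise disjoint subsets $S_1,\ldots,S_k\subseteq V$. For disjoint $V_1,V_2$ with $V_1\cup V_2\neq\emptyset$, $\overline{\phi}(V_1,V_2):=2|E(V_1,V_2)|/\mathrm{vol}(V_1\cup V_2)$.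 A $k$-sub-bipartition is a collection of $k$ pairs $(V_1,V_2),\ldots,(V_{2k-1},V_{2k})$ of pairwise disjoint subsets of $V$ with $V_{2i-1}\cup V_{2i}\neq\emptyset$ for each $i$ (individual sets may be empty); $\overline{h}(k):=\max\min_{1\leq i\leq k}\overline{\phi}(V_{2i-1},V_{2i})$ over all $k$-sub-bipartitions. A graph is bipartite if its vertex set splits into two classes with every edge joining vertices of different classes. *)

theory Defs
  imports Complex_Main
begin

text \<open>A weighted finite graph is given by a finite vertex set V and a weight
  function w; w u v > 0 iff {u,v} is an edge, w u v = 0 otherwise.\<close>

definition weighted_graph :: "'a set \<Rightarrow> ('a \<Rightarrow> 'a \<Rightarrow> real) \<Rightarrow> bool" where
  "weighted_graph V w \<longleftrightarrow> finite V
     \<and> (\<forall>u v. w u v = w v u)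
     \<and> (\<forall>u v. w u v \<ge> 0)
     \<and> (\<forall>u. w u u = 0)
     \<and> (\<forall>u v. (u \<notin> V \<or> v \<notin> V) \<longrightarrow> w u v = 0)"

definition deg :: "'a set \<Rightarrow> ('a \<Rightarrow> 'a \<Rightarrow> real) \<Rightarrow> 'a \<Rightarrow> real" where
  "deg V w u = (\<Sum>v\<in>V. w u v)"

definition cut :: "('a \<Rightarrow> 'a \<Rightarrow> real) \<Rightarrow> 'a set \<Rightarrow> 'a set \<Rightarrow> real" where
  "cut w A B = (\<Sum>u\<in>A. \<Sum>v\<in>B. w u v)"

definition vol :: "'a set \<Rightarrow> ('a \<Rightarrow> 'a \<Rightarrow> real) \<Rightarrow> 'a set \<Rightarrow> real" where
  "vol V w A = (\<Sum>u\<in>A. deg V w u)"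

definition phi :: "'a set \<Rightarrow> ('a \<Rightarrow> 'a \<Rightarrow> real) \<Rightarrow> 'a set \<Rightarrow> real" where
  "phi V w S = cut w S (V - S) / vol V w S"

definition phibar :: "'a set \<Rightarrow> ('a \<Rightarrow> 'a \<Rightarrow> real) \<Rightarrow> 'a set \<Rightarrow> 'a set \<Rightarrow> real" where
  "phibar V w A B = 2 * cut w A B / vol V w (A \<union> B)"

definition disjoint_family_k :: "'a set \<Rightarrow> nat \<Rightarrow> (nat \<Rightarrow> 'a set) \<Rightarrow> bool" where
  "disjoint_family_k V k S \<longleftrightarrow>
     (\<forall>i\<in>{1..k}. S i \<noteq> {} \<and> S i \<subseteq> V)
     \<and> (\<forall>i\<in>{1..k}. \<forall>j\<in>{1..k}. i \<noteq> j \<longrightarrow> S i \<inter> S j = {})"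

definition h :: "'a set \<Rightarrow> ('a \<Rightarrow> 'a \<Rightarrow> real) \<Rightarrow> nat \<Rightarrow> real" where
  "h V w k = Min ((\<lambda>S. Max ((\<lambda>i. phi V w (S i)) ` {1..k})) ` {S. disjoint_family_k V k S})"

definition sub_bipartition :: "'a set \<Rightarrow> nat \<Rightarrow> (nat \<Rightarrow> 'a set) \<Rightarrow> bool" where
  "sub_bipartition V k P \<longleftrightarrow>
     (\<forall>i\<in>{1..2*k}. P i \<subseteq> V)
     \<and> (\<forall>i\<in>{1..2*k}. \<forall>j\<in>{1..2*k}. i \<noteq> j \<longrightarrow> P i \<inter> P j = {})
     \<and> (\<forall>i\<in>{1..k}. P (2*i - 1) \<union> P (2*i) \<noteq> {})"

definition hbar_val :: "'a set \<Rightarrow> ('a \<Rightarrow> 'a \<Rightarrow> real) \<Rightarrow> nat \<Rightarrow> (nat \<Rightarrow> 'a set) \<Rightarrow> real" where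
  "hbar_val V w k P = Min ((\<lambda>i. phibar V w (P (2*i - 1)) (P (2*i))) ` {1..k})"

definition hbar :: "'a set \<Rightarrow> ('a \<Rightarrow> 'a \<Rightarrow> real) \<Rightarrow> nat \<Rightarrow> real" where
  "hbar V w k = Max (hbar_val V w k ` {P. sub_bipartition V k P})"

definition adj :: "'a set \<Rightarrow> ('a \<Rightarrow> 'a \<Rightarrow> real) \<Rightarrow> ('a \<times> 'a) set" where
  "adj V w = {(u, v). u \<in> V \<and> v \<in> V \<and> w u v > 0}"

definition components :: "'a set \<Rightarrow> ('a \<Rightarrow> 'a \<Rightarrow> real) \<Rightarrow> 'a set set" where
  "components V w = {(adj V w)\<^sup>* `` {v} | v. v \<in> V}"

definition bipartite_on :: "('a \<Rightarrow> 'a \<Rightarrow> real) \<Rightarrow> 'a set \<Rightarrow> bool" where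
  "bipartite_on w C \<longleftrightarrow> (\<exists>A B. A \<union> B = C \<and> A \<inter> B = {}
      \<and> (\<forall>u\<in>C. \<forall>v\<in>C. w u v > 0 \<longrightarrow> \<not> ((u \<in> A \<and> v \<in> A) \<or> (u \<in> B \<and> v \<in> B))))"

end

theory Submission
  imports Defs "HOL-Library.FuncSet"
begin

(*
  Every pair (A, B) of a sub-bipartition satisfies
    vol (A \<union> B) = |E(A,A)| + 2 |E(A,B)| + |E(B,B)| + |E(A \<union> B, V - (A \<union> B))|,
  that is,  phibar A B = 1 - phi (A \<union> B) - (|E(A,A)| + |E(B,B)|) / vol (A \<union> B).
  The unions of the pairs form k disjoint sets, so for an optimal sub-bipartition the pair
  whose union has the largest expansion has phi (A \<union> B) \<ge> h(k); hence hbar(k) \<le> 1 - h(k),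
  and equality forces the inner cuts of that pair to vanish. Splitting the sets of an optimal
  family for h(k) along a bipartition of G removes all inner edges, which gives equality for
  bipartite G. Finally, hbar(k) = 1 means that every pair has neither boundary nor inner
  edges, so its union contains a bipartite component; conversely, k bipartite components,
  each split along its bipartition, give hbar(k) = 1.
*)

lemma weighted_graphD:
  assumes "weighted_graph V w"
  shows "finite V" and "\<forall>u v. w u v = w v u" and "\<forall>u v. 0 \<le> w u v"
  using assms unfolding weighted_graph_def by auto

subsection \<open>Cuts and volumes\<close>

lemma cut_nonneg: "(\<forall>u v. 0 \<le> w u v) \<Longrightarrow> 0 \<le> cut w A B"
  unfolding cut_def by (intro sum_nonneg) auto

lemma cut_commute:
  assumes "\<forall>u v. w u v = w v u"
  shows "cut w A B = cut w B A"
  unfolding cut_def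
  by (subst sum.swap) (intro sum.cong refl spec[OF spec[OF assms]])

lemma cut_Un_left:
  "finite A \<Longrightarrow> finite B \<Longrightarrow> A \<inter> B = {} \<Longrightarrow> cut w (A \<union> B) C = cut w A C + cut w B C"
  unfolding cut_def by (simp add: sum.union_disjoint)

lemma cut_Un_right:
  "finite B \<Longrightarrow> finite C \<Longrightarrow> B \<inter> C = {} \<Longrightarrow> cut w A (B \<union> C) = cut w A B + cut w A C"
  unfolding cut_def by (simp add: sum.union_disjoint sum.distrib)

lemma cut_eq_0_iff:
  assumes "\<forall>u v. 0 \<le> w u v" "finite A" "finite B"
  shows "cut w A B = 0 \<longleftrightarrow> (\<forall>u\<in>A. \<forall>v\<in>B. w u v = 0)"
  unfolding cut_def using assms by (simp add: sum_nonneg_eq_0_iff sum_nonneg)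

lemma vol_eq_cut:
  assumes "finite V" "S \<subseteq> V"
  shows "vol V w S = cut w S S + cut w S (V - S)"
proof -
  have "vol V w S = cut w S (S \<union> (V - S))"
    using assms(2) by (simp add: vol_def deg_def cut_def Un_absorb1)
  also have "\<dots> = cut w S S + cut w S (V - S)"
    using assms by (intro cut_Un_right) (auto intro: finite_subset)
  finally show ?thesis .
qed

lemma phi_nonneg: "(\<forall>u v. 0 \<le> w u v) \<Longrightarrow> 0 \<le> phi V w S"
  unfolding phi_def vol_def deg_def cut_def by (intro divide_nonneg_nonneg sum_nonneg) auto

lemma vol_nonneg: "(\<forall>u v. 0 \<le> w u v) \<Longrightarrow> 0 \<le> vol V w S"
  unfolding vol_def deg_def by (intro sum_nonneg) auto

lemma phibar_eq:
  assumes "weighted_graph V w" "A \<subseteq> V" "B \<subseteq> V" "A \<inter> B = {}" "vol V w (A \<union> B) \<noteq> 0"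
  shows "phibar V w A B
    = 1 - phi V w (A \<union> B) - (cut w A A + cut w B B) / vol V w (A \<union> B)"
proof -
  have fin: "finite A" "finite B"
    using assms(1-3) weighted_graphD(1) finite_subset by metis+
  have "vol V w (A \<union> B)
      = cut w A A + 2 * cut w A B + cut w B B + cut w (A \<union> B) (V - (A \<union> B))"
    using vol_eq_cut[OF weighted_graphD(1)[OF assms(1)], of "A \<union> B" w] assms(2-4) fin
      cut_commute[of w B A, OF weighted_graphD(2)[OF assms(1)]]
    by (simp add: cut_Un_left cut_Un_right)
  moreover have "2 * c / v = 1 - t / v - (a + b) / v"
    if "v \<noteq> 0" "v = a + 2 * c + b + t" for v a b c t :: real
  proof -
    have "1 - t / v - (a + b) / v = (v - t - (a + b)) / v"
      using that(1) by (simp add: field_simps)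
    then show ?thesis
      using that(2) by simp
  qed
  ultimately show ?thesis
    using assms(5) unfolding phibar_def phi_def by blast
qed

subsection \<open>Connected components and bipartiteness\<close>

lemma components_subset:
  assumes "C \<in> components V w"
  shows "C \<subseteq> V"
proof -
  obtain x where "x \<in> V" "C = (adj V w)\<^sup>* `` {x}"
    using assms unfolding components_def by blast
  moreover have "(adj V w)\<^sup>* `` V = V"
    by (rule Image_closed_trancl) (auto simp: adj_def)
  ultimately show ?thesis
    by blast
qed

lemma components_disjoint:
  assumes "weighted_graph V w" "C \<in> components V w" "D \<in> components V w" "C \<noteq> D"
  shows "C \<inter> D = {}"
proof -
  have "sym (adj V w)"
    using weighted_graphD(2)[OF assms(1)] unfolding sym_def adj_def by auto
  then have equiv: "equiv UNIV ((adj V w)\<^sup>*)"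
    by (intro equivI refl_rtrancl sym_rtrancl trans_rtrancl) auto
  obtain a b where "C = (adj V w)\<^sup>* `` {a}" "D = (adj V w)\<^sup>* `` {b}"
    using assms(2,3) unfolding components_def by blast
  then show ?thesis
    using assms(4) equiv_class_eq[OF equiv] equiv_class_nondisjoint[OF equiv] by blast
qed

lemma finite_components: "finite V \<Longrightarrow> finite (components V w)"
  using components_subset by (metis Pow_iff finite_Pow_iff finite_subset subsetI)

lemma cut_component_complement:
  assumes "weighted_graph V w" "C \<in> components V w"
  shows "cut w C (V - C) = 0"
proof -
  have "w u v = 0" if "u \<in> C" "v \<in> V - C" for u v
  proof (rule ccontr)
    assume "w u v \<noteq> 0"
    then have "0 < w u v"
      using weighted_graphD(3)[OF assms(1)] by (simp add: order_less_le)
    then have "(u, v) \<in> adj V w"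
      using that components_subset[OF assms(2)] unfolding adj_def by auto
    moreover obtain x where "C = (adj V w)\<^sup>* `` {x}"
      using assms(2) unfolding components_def by blast
    ultimately show False
      using that by (auto intro: rtrancl_into_rtrancl)
  qed
  then show ?thesis
    using weighted_graphD[OF assms(1)] components_subset[OF assms(2)]
    by (subst cut_eq_0_iff) (auto intro: finite_subset)
qed

lemma component_subset_of_isolated:
  assumes "weighted_graph V w" "S \<subseteq> V" "cut w S (V - S) = 0" "x \<in> S"
  shows "(adj V w)\<^sup>* `` {x} \<subseteq> S"
proof -
  have "\<forall>u\<in>S. \<forall>v\<in>V - S. w u v = 0"
    using assms(1-3) weighted_graphD[OF assms(1)]
    by (subst cut_eq_0_iff[symmetric]) (auto intro: finite_subset)
  then have "adj V w `` S \<subseteq> S"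
    unfolding adj_def by force
  then have "(adj V w)\<^sup>* `` S = S"
    by (rule Image_closed_trancl)
  then show ?thesis
    using assms(4) by blast
qed

lemma bipartite_on_subset:
  assumes "bipartite_on w S" "C \<subseteq> S"
  shows "bipartite_on w C"
proof -
  obtain A B where "A \<union> B = S" "A \<inter> B = {}"
    "\<forall>u\<in>S. \<forall>v\<in>S. 0 < w u v \<longrightarrow> \<not> (u \<in> A \<and> v \<in> A \<or> u \<in> B \<and> v \<in> B)"
    using assms(1) unfolding bipartite_on_def by blast
  then show ?thesis
    unfolding bipartite_on_def using assms(2) by (intro exI[of _ "C \<inter> A"] exI[of _ "C \<inter> B"]) blast
qed

lemma bipartite_on_iff_cuts:
  assumes "\<forall>u v. 0 \<le> w u v" "finite C"
  shows "bipartite_on w C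
    \<longleftrightarrow> (\<exists>A B. A \<union> B = C \<and> A \<inter> B = {} \<and> cut w A A = 0 \<and> cut w B B = 0)"
proof -
  have "(\<forall>u\<in>C. \<forall>v\<in>C. 0 < w u v \<longrightarrow> \<not> (u \<in> A \<and> v \<in> A \<or> u \<in> B \<and> v \<in> B))
      \<longleftrightarrow> cut w A A = 0 \<and> cut w B B = 0"
    if "A \<union> B = C" for A B
  proof -
    have "finite A" "finite B"
      using that assms(2) by auto
    then show ?thesis
      using that assms(1) by (auto simp: cut_eq_0_iff order.strict_iff_order)
  qed
  then show ?thesis
    unfolding bipartite_on_def by blast
qed

lemma bipartite_component_in_isolated:
  assumes "weighted_graph V w" "S \<subseteq> V" "cut w S (V - S) = 0" "bipartite_on w S" "x \<in> S"
  obtains C where "C \<in> components V w" "bipartite_on w C" "x \<in> C" "C \<subseteq> S"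
proof
  let ?C = "(adj V w)\<^sup>* `` {x}"
  show "?C \<in> components V w"
    using assms(2,5) unfolding components_def by blast
  show "?C \<subseteq> S"
    by (rule component_subset_of_isolated[OF assms(1-3,5)])
  then show "bipartite_on w ?C"
    using assms(4) by (rule bipartite_on_subset[rotated])
qed simp

subsection \<open>Families of sets and sub-bipartitions\<close>

lemma finite_image_families:
  assumes "finite V" "finite I" "\<And>P i. P \<in> \<F> \<Longrightarrow> i \<in> I \<Longrightarrow> P i \<subseteq> V"
    and "\<And>P Q. (\<And>i. i \<in> I \<Longrightarrow> P i = Q i) \<Longrightarrow> F P = F Q"
  shows "finite (F ` \<F>)"
proof (rule finite_subset)
  show "F ` \<F> \<subseteq> F ` (\<Pi>\<^sub>E i\<in>I. Pow V)"
  proof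
    fix x assume "x \<in> F ` \<F>"
    then obtain P where "P \<in> \<F>" "x = F P"
      by blast
    moreover have "F P = F (restrict P I)"
      by (rule assms(4)) simp
    moreover have "restrict P I \<in> (\<Pi>\<^sub>E i\<in>I. Pow V)"
      using assms(3) \<open>P \<in> \<F>\<close> by auto
    ultimately show "x \<in> F ` (\<Pi>\<^sub>E i\<in>I. Pow V)"
      by blast
  qed
  show "finite (F ` (\<Pi>\<^sub>E i\<in>I. Pow V))"
    using assms(1,2) by (simp add: finite_PiE)
qed

lemma disjoint_family_k_exists:
  assumes "finite V" "k \<le> card V"
  obtains S where "disjoint_family_k V k S"
proof -
  obtain f where "f ` {1..k} \<subseteq> V" "inj_on f {1..k}"
    using card_le_inj[of "{1..k}" V] assms by auto
  then have "disjoint_family_k V k (\<lambda>i. {f i})"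
    unfolding disjoint_family_k_def by (auto dest: inj_onD)
  then show thesis ..
qed

lemma disjoint_family_k_components:
  assumes "weighted_graph V w" "g ` {1..k} \<subseteq> components V w" "inj_on g {1..k}"
  shows "disjoint_family_k V k g"
  unfolding disjoint_family_k_def
proof (intro conjI ballI impI)
  fix i assume "i \<in> {1..k}"
  then have "g i \<in> components V w"
    using assms(2) by blast
  then show "g i \<subseteq> V"
    by (rule components_subset)
  from \<open>g i \<in> components V w\<close> show "g i \<noteq> {}"
    unfolding components_def by blast
next
  fix i j assume "i \<in> {1..k}" "j \<in> {1..k}" "i \<noteq> j"
  then show "g i \<inter> g j = {}"
    using assms components_disjoint by (metis image_subset_iff inj_on_contraD)
qed

lemma sub_bipartitionD:
  assumes "sub_bipartition V k P" "i \<in> {1..k}"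
  shows "P (2*i - 1) \<subseteq> V" "P (2*i) \<subseteq> V" "P (2*i - 1) \<inter> P (2*i) = {}"
    and "P (2*i - 1) \<union> P (2*i) \<noteq> {}"
proof -
  have "2*i - 1 \<in> {1..2*k}" "2*i \<in> {1..2*k}" "2*i - 1 \<noteq> 2*i"
    using assms(2) by auto
  then show "P (2*i - 1) \<subseteq> V" "P (2*i) \<subseteq> V" "P (2*i - 1) \<inter> P (2*i) = {}"
    using assms(1) unfolding sub_bipartition_def by blast+
  show "P (2*i - 1) \<union> P (2*i) \<noteq> {}"
    using assms unfolding sub_bipartition_def by blast
qed

lemma disjoint_family_k_pair_unions:
  assumes "sub_bipartition V k P"
  shows "disjoint_family_k V k (\<lambda>i. P (2*i - 1) \<union> P (2*i))"
  unfolding disjoint_family_k_def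
proof (intro conjI ballI impI)
  fix i assume "i \<in> {1..k}"
  then show "P (2*i - 1) \<union> P (2*i) \<noteq> {}" "P (2*i - 1) \<union> P (2*i) \<subseteq> V"
    using sub_bipartitionD[OF assms] by blast+
next
  fix i j assume ij: "i \<in> {1..k}" "j \<in> {1..k}" "i \<noteq> j"
  have disj: "P a \<inter> P b = {}" if "a \<in> {1..2*k}" "b \<in> {1..2*k}" "a \<noteq> b" for a b
    using assms that unfolding sub_bipartition_def by blast
  have "P (2*i - 1) \<inter> P (2*j - 1) = {}" "P (2*i - 1) \<inter> P (2*j) = {}"
    "P (2*i) \<inter> P (2*j - 1) = {}" "P (2*i) \<inter> P (2*j) = {}"
    by (rule disj; use ij in auto)+
  then show "(P (2*i - 1) \<union> P (2*i)) \<inter> (P (2*j - 1) \<union> P (2*j)) = {}"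
    by blast
qed

definition interleave :: "(nat \<Rightarrow> 'a set) \<Rightarrow> (nat \<Rightarrow> 'a set) \<Rightarrow> nat \<Rightarrow> 'a set" where
  "interleave A B j = (if even j then B (j div 2) else A ((j + 1) div 2))"

lemma interleave_odd: "0 < i \<Longrightarrow> interleave A B (2*i - 1) = A i"
  unfolding interleave_def by (simp add: odd_pos)

lemma interleave_even: "interleave A B (2*i) = B i"
  unfolding interleave_def by simp

lemma sub_bipartition_interleave:
  assumes "disjoint_family_k V k S"
    and "\<And>i. i \<in> {1..k} \<Longrightarrow> A i \<union> B i = S i" "\<And>i. i \<in> {1..k} \<Longrightarrow> A i \<inter> B i = {}"
  shows "sub_bipartition V k (interleave A B)"
proof -
  let ?m = "\<lambda>j::nat. (j + 1) div 2"
  have m_range: "?m j \<in> {1..k}" if "j \<in> {1..2*k}" for j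
    using that by auto
  have piece: "interleave A B j = (if even j then B (?m j) else A (?m j))" for j
    unfolding interleave_def by (auto elim: evenE)
  have in_S: "interleave A B j \<subseteq> S (?m j)" if "j \<in> {1..2*k}" for j
    using assms(2)[OF m_range[OF that]] piece[of j] by auto
  have disj: "interleave A B j \<inter> interleave A B j' = {}"
    if "j \<in> {1..2*k}" "j' \<in> {1..2*k}" "j \<noteq> j'" for j j'
  proof (cases "?m j = ?m j'")
    case True
    then have "even j \<noteq> even j'"
      using that(3) by presburger
    then show ?thesis
      using True piece[of j] piece[of j'] assms(3)[OF m_range[OF that(1)]] by (auto simp: Int_commute)
  next
    case False
    then have "S (?m j) \<inter> S (?m j') = {}"
      using assms(1) m_range that unfolding disjoint_family_k_def by blast
    then show ?thesis
      using in_S that by blast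
  qed
  show ?thesis
    unfolding sub_bipartition_def
  proof (intro conjI ballI impI)
    fix j assume "j \<in> {1..2*k}"
    then show "interleave A B j \<subseteq> V"
      using in_S m_range assms(1) unfolding disjoint_family_k_def by blast
  next
    fix j j' assume "j \<in> {1..2*k}" "j' \<in> {1..2*k}" "j \<noteq> j'"
    then show "interleave A B j \<inter> interleave A B j' = {}"
      by (rule disj)
  next
    fix i assume i: "i \<in> {1..k}"
    then have "interleave A B (2*i - 1) = A i"
      by (intro interleave_odd) auto
    then have "interleave A B (2*i - 1) \<union> interleave A B (2*i) = S i"
      using assms(2) i by (simp add: interleave_even)
    then show "interleave A B (2*i - 1) \<union> interleave A B (2*i) \<noteq> {}"
      using assms(1) i unfolding disjoint_family_k_def by auto
  qed
qed

lemma le_hbar_val_iff: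
  "1 \<le> k \<Longrightarrow> c \<le> hbar_val V w k P \<longleftrightarrow> (\<forall>i\<in>{1..k}. c \<le> phibar V w (P (2*i - 1)) (P (2*i)))"
  unfolding hbar_val_def by (subst Min_ge_iff) auto

lemma hbar_val_le_phibar:
  "i \<in> {1..k} \<Longrightarrow> hbar_val V w k P \<le> phibar V w (P (2*i - 1)) (P (2*i))"
  unfolding hbar_val_def by (intro Min_le) auto

locale positive_weighted_graph =
  fixes V :: "'a set" and w :: "'a \<Rightarrow> 'a \<Rightarrow> real"
  assumes weighted_graph: "weighted_graph V w"
    and deg_pos: "\<forall>u\<in>V. 0 < deg V w u"
begin

lemma finite_V: "finite V"
  using weighted_graph by (rule weighted_graphD)

lemma w_nonneg: "\<forall>u v. 0 \<le> w u v"
  using weighted_graph by (rule weighted_graphD)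

lemma vol_pos: "S \<subseteq> V \<Longrightarrow> S \<noteq> {} \<Longrightarrow> 0 < vol V w S"
  unfolding vol_def using deg_pos finite_V by (intro sum_pos) (auto intro: finite_subset)

lemma phibar_eq_1_minus_phi:
  assumes "A \<subseteq> V" "B \<subseteq> V" "A \<inter> B = {}" "A \<union> B \<noteq> {}" "cut w A A = 0" "cut w B B = 0"
  shows "phibar V w A B = 1 - phi V w (A \<union> B)"
  using phibar_eq[OF weighted_graph assms(1-3)] vol_pos[of "A \<union> B"] assms by simp

lemma phibar_ge_1_iff:
  assumes "A \<subseteq> V" "B \<subseteq> V" "A \<inter> B = {}" "A \<union> B \<noteq> {}"
  shows "1 \<le> phibar V w A B \<longleftrightarrow> phi V w (A \<union> B) = 0 \<and> cut w A A = 0 \<and> cut w B B = 0"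
proof -
  have vol: "0 < vol V w (A \<union> B)"
    using vol_pos assms by auto
  have nonneg: "0 \<le> phi V w (A \<union> B)" "0 \<le> cut w A A" "0 \<le> cut w B B"
    using phi_nonneg cut_nonneg w_nonneg by blast+
  define q where "q = (cut w A A + cut w B B) / vol V w (A \<union> B)"
  have "0 \<le> q" "q = 0 \<longleftrightarrow> cut w A A = 0 \<and> cut w B B = 0"
    unfolding q_def using vol nonneg by (simp_all add: add_nonneg_eq_0_iff)
  moreover have "phibar V w A B = 1 - phi V w (A \<union> B) - q"
    unfolding q_def using phibar_eq[OF weighted_graph assms(1-3)] vol by simp
  ultimately show ?thesis
    using nonneg(1) by auto
qed

lemma finite_h_values:
  "finite ((\<lambda>S. Max ((\<lambda>i. phi V w (S i)) ` {1..k})) ` {S. disjoint_family_k V k S})"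
proof (rule finite_image_families[OF finite_V finite_atLeastAtMost])
  show "S i \<subseteq> V" if "S \<in> {S. disjoint_family_k V k S}" "i \<in> {1..k}" for S i
    using that unfolding disjoint_family_k_def by blast
  show "Max ((\<lambda>i. phi V w (S i)) ` {1..k}) = Max ((\<lambda>i. phi V w (T i)) ` {1..k})"
    if "\<And>i. i \<in> {1..k} \<Longrightarrow> S i = T i" for S T
    using that by (intro arg_cong[where f = Max] image_cong) auto
qed

lemma h_le: "disjoint_family_k V k S \<Longrightarrow> h V w k \<le> Max ((\<lambda>i. phi V w (S i)) ` {1..k})"
  unfolding h_def using finite_h_values by (intro Min_le) auto

lemma h_attained:
  assumes "k \<le> card V"
  obtains S where "disjoint_family_k V k S" "h V w k = Max ((\<lambda>i. phi V w (S i)) ` {1..k})"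
proof -
  obtain S where "disjoint_family_k V k S"
    using disjoint_family_k_exists[OF finite_V assms] .
  then have "(\<lambda>S. Max ((\<lambda>i. phi V w (S i)) ` {1..k})) ` {S. disjoint_family_k V k S} \<noteq> {}"
    by blast
  from Min_in[OF finite_h_values this] show thesis
    using that unfolding h_def by auto
qed

lemma h_nonneg:
  assumes "1 \<le> k" "k \<le> card V"
  shows "0 \<le> h V w k"
proof -
  obtain S where "h V w k = Max ((\<lambda>i. phi V w (S i)) ` {1..k})"
    using h_attained[OF assms(2)] .
  moreover have "phi V w (S 1) \<le> Max ((\<lambda>i. phi V w (S i)) ` {1..k})"
    using assms(1) by (intro Max_ge) auto
  moreover have "0 \<le> phi V w (S 1)"
    using phi_nonneg w_nonneg by blast
  ultimately show ?thesis
    by linarith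
qed

lemma finite_hbar_values: "finite (hbar_val V w k ` {P. sub_bipartition V k P})"
proof (rule finite_image_families[OF finite_V, of "{1..2*k}"])
  show "P j \<subseteq> V" if "P \<in> {P. sub_bipartition V k P}" "j \<in> {1..2*k}" for P j
    using that unfolding sub_bipartition_def by blast
  show "hbar_val V w k P = hbar_val V w k Q" if "\<And>j. j \<in> {1..2*k} \<Longrightarrow> P j = Q j" for P Q
  proof -
    have "P (2*i - 1) = Q (2*i - 1) \<and> P (2*i) = Q (2*i)" if "i \<in> {1..k}" for i
    proof -
      have "2*i - 1 \<in> {1..2*k}" "2*i \<in> {1..2*k}"
        using that by auto
      then show ?thesis
        using \<open>\<And>j. j \<in> {1..2*k} \<Longrightarrow> P j = Q j\<close> by blast
    qed
    then show ?thesis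
      unfolding hbar_val_def by (intro arg_cong[where f = Min] image_cong) auto
  qed
qed simp

lemma hbar_val_le_hbar: "sub_bipartition V k P \<Longrightarrow> hbar_val V w k P \<le> hbar V w k"
  unfolding hbar_def using finite_hbar_values by (intro Max_ge) auto

lemma hbar_attained:
  assumes "k \<le> card V"
  obtains P where "sub_bipartition V k P" "hbar V w k = hbar_val V w k P"
proof -
  obtain S where "disjoint_family_k V k S"
    using disjoint_family_k_exists[OF finite_V assms] .
  then have "sub_bipartition V k (interleave S (\<lambda>_. {}))"
    by (rule sub_bipartition_interleave) auto
  then have "hbar_val V w k ` {P. sub_bipartition V k P} \<noteq> {}"
    by blast
  from Max_in[OF finite_hbar_values this] show thesis
    using that unfolding hbar_def by auto
qed

lemma hbar_val_plus_inner_cuts_le: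
  assumes "sub_bipartition V k P" "i0 \<in> {1..k}"
    and "phi V w (P (2*i0 - 1) \<union> P (2*i0))
      = Max ((\<lambda>i. phi V w (P (2*i - 1) \<union> P (2*i))) ` {1..k})"
  shows "hbar_val V w k P
      + (cut w (P (2*i0 - 1)) (P (2*i0 - 1)) + cut w (P (2*i0)) (P (2*i0)))
        / vol V w (P (2*i0 - 1) \<union> P (2*i0))
    \<le> 1 - h V w k"
proof -
  note pieces = sub_bipartitionD[OF assms(1,2)]
  have "hbar_val V w k P \<le> phibar V w (P (2*i0 - 1)) (P (2*i0))"
    using assms(2) by (rule hbar_val_le_phibar)
  also have "\<dots> = 1 - phi V w (P (2*i0 - 1) \<union> P (2*i0))
      - (cut w (P (2*i0 - 1)) (P (2*i0 - 1)) + cut w (P (2*i0)) (P (2*i0)))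
        / vol V w (P (2*i0 - 1) \<union> P (2*i0))"
    using phibar_eq[OF weighted_graph pieces(1-3)] vol_pos[OF _ pieces(4)] pieces(1,2) by simp
  finally show ?thesis
    using h_le[OF disjoint_family_k_pair_unions[OF assms(1)]] assms(3) by simp
qed

lemma hbar_le_1_minus_h:
  assumes "1 \<le> k" "k \<le> card V"
  shows "hbar V w k \<le> 1 - h V w k"
proof -
  obtain P where P: "sub_bipartition V k P" "hbar V w k = hbar_val V w k P"
    using hbar_attained[OF assms(2)] .
  let ?phi = "\<lambda>i. phi V w (P (2*i - 1) \<union> P (2*i))"
  have "Max (?phi ` {1..k}) \<in> ?phi ` {1..k}"
    using assms(1) by (intro Max_in) auto
  then obtain i0 where i0: "i0 \<in> {1..k}" "?phi i0 = Max (?phi ` {1..k})"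
    by (auto simp del: atLeastAtMost_iff)
  have "0 \<le> (cut w (P (2*i0 - 1)) (P (2*i0 - 1)) + cut w (P (2*i0)) (P (2*i0)))
      / vol V w (P (2*i0 - 1) \<union> P (2*i0))"
    using cut_nonneg[OF w_nonneg] vol_nonneg[OF w_nonneg] by (intro divide_nonneg_nonneg add_nonneg_nonneg)
  then show ?thesis
    using hbar_val_plus_inner_cuts_le[OF P(1) i0] P(2) by linarith
qed

lemma inner_cuts_eq_0_if_h_plus_hbar_eq_1:
  assumes "h V w k + hbar V w k = 1" "sub_bipartition V k P" "hbar_val V w k P = hbar V w k"
    and "i0 \<in> {1..k}"
    and "phi V w (P (2*i0 - 1) \<union> P (2*i0))
      = Max ((\<lambda>i. phi V w (P (2*i - 1) \<union> P (2*i))) ` {1..k})"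
  shows "cut w (P (2*i0 - 1)) (P (2*i0 - 1)) = 0 \<and> cut w (P (2*i0)) (P (2*i0)) = 0"
proof -
  have "(cut w (P (2*i0 - 1)) (P (2*i0 - 1)) + cut w (P (2*i0)) (P (2*i0)))
      / vol V w (P (2*i0 - 1) \<union> P (2*i0)) \<le> 0"
    using hbar_val_plus_inner_cuts_le[OF assms(2,4,5)] assms(1,3) by linarith
  moreover have "0 < vol V w (P (2*i0 - 1) \<union> P (2*i0))"
    using sub_bipartitionD[OF assms(2,4)] by (intro vol_pos) auto
  ultimately have "cut w (P (2*i0 - 1)) (P (2*i0 - 1)) + cut w (P (2*i0)) (P (2*i0)) \<le> 0"
    by (simp add: divide_le_0_iff)
  moreover have "0 \<le> cut w (P (2*i0 - 1)) (P (2*i0 - 1))" "0 \<le> cut w (P (2*i0)) (P (2*i0))"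
    using cut_nonneg w_nonneg by blast+
  ultimately show ?thesis
    by linarith
qed

lemma sub_bipartition_of_bipartite_family:
  assumes "disjoint_family_k V k S" "\<And>i. i \<in> {1..k} \<Longrightarrow> bipartite_on w (S i)"
  obtains P where "sub_bipartition V k P"
    "\<And>i. i \<in> {1..k} \<Longrightarrow> phibar V w (P (2*i - 1)) (P (2*i)) = 1 - phi V w (S i)"
proof -
  have S: "S i \<subseteq> V" "S i \<noteq> {}" if "i \<in> {1..k}" for i
    using assms(1) that unfolding disjoint_family_k_def by blast+
  have "\<exists>A B. A \<union> B = S i \<and> A \<inter> B = {} \<and> cut w A A = 0 \<and> cut w B B = 0"
    if "i \<in> {1..k}" for i
    using assms(2)[OF that] bipartite_on_iff_cuts[OF w_nonneg finite_subset[OF S(1)[OF that] finite_V]]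
    by blast
  then obtain A B where AB: "\<And>i. i \<in> {1..k} \<Longrightarrow>
      A i \<union> B i = S i \<and> A i \<inter> B i = {} \<and> cut w (A i) (A i) = 0 \<and> cut w (B i) (B i) = 0"
    by metis
  have A_B: "A i \<union> B i = S i" "A i \<inter> B i = {}" "cut w (A i) (A i) = 0" "cut w (B i) (B i) = 0"
    if "i \<in> {1..k}" for i
    using AB[OF that] by blast+
  show thesis
  proof
    show "sub_bipartition V k (interleave A B)"
      by (rule sub_bipartition_interleave[OF assms(1) A_B(1,2)])
    fix i assume i: "i \<in> {1..k}"
    then have "interleave A B (2*i - 1) = A i" "interleave A B (2*i) = B i"
      by (intro interleave_odd interleave_even; simp)+
    moreover have "A i \<subseteq> V" "B i \<subseteq> V" "A i \<union> B i \<noteq> {}"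
      using A_B(1)[OF i] S[OF i] by auto
    then have "phibar V w (A i) (B i) = 1 - phi V w (S i)"
      using phibar_eq_1_minus_phi A_B[OF i] by metis
    ultimately show "phibar V w (interleave A B (2*i - 1)) (interleave A B (2*i)) = 1 - phi V w (S i)"
      by simp
  qed
qed

lemma h_plus_hbar_eq_1_if_bipartite:
  assumes "bipartite_on w V" "1 \<le> k" "k \<le> card V"
  shows "h V w k + hbar V w k = 1"
proof -
  obtain S where S: "disjoint_family_k V k S" "h V w k = Max ((\<lambda>i. phi V w (S i)) ` {1..k})"
    using h_attained[OF assms(3)] .
  have "bipartite_on w (S i)" if "i \<in> {1..k}" for i
    using bipartite_on_subset[OF assms(1)] S(1) that unfolding disjoint_family_k_def by blast
  then obtain P where P: "sub_bipartition V k P"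
    "\<And>i. i \<in> {1..k} \<Longrightarrow> phibar V w (P (2*i - 1)) (P (2*i)) = 1 - phi V w (S i)"
    using sub_bipartition_of_bipartite_family[OF S(1)] by blast
  have "1 - h V w k \<le> phibar V w (P (2*i - 1)) (P (2*i))" if "i \<in> {1..k}" for i
    using P(2)[OF that] S(2) that by simp
  then have "1 - h V w k \<le> hbar_val V w k P"
    using le_hbar_val_iff[OF assms(2)] by blast
  then show ?thesis
    using hbar_val_le_hbar[OF P(1)] hbar_le_1_minus_h[OF assms(2,3)] by linarith
qed

lemma bipartite_component_in_pair:
  assumes "A \<subseteq> V" "B \<subseteq> V" "A \<inter> B = {}" "A \<union> B \<noteq> {}" "1 \<le> phibar V w A B"
  obtains C where "C \<in> components V w" "bipartite_on w C" "C \<noteq> {}" "C \<subseteq> A \<union> B"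
proof -
  have phi: "phi V w (A \<union> B) = 0" and inner: "cut w A A = 0" "cut w B B = 0"
    using phibar_ge_1_iff[OF assms(1-4)] assms(5) by auto
  have sub: "A \<union> B \<subseteq> V"
    using assms(1,2) by blast
  have "cut w (A \<union> B) (V - (A \<union> B)) = 0"
    using phi vol_pos[OF sub assms(4)] unfolding phi_def by simp
  moreover have "bipartite_on w (A \<union> B)"
    using bipartite_on_iff_cuts[OF w_nonneg finite_subset[OF sub finite_V]] inner assms(3) by blast
  moreover obtain x where "x \<in> A \<union> B"
    using assms(4) by blast
  ultimately show thesis
    using bipartite_component_in_isolated[OF weighted_graph sub] that by blast
qed

lemma card_bipartite_components_ge_if_hbar_eq_1:
  assumes "hbar V w k = 1" "1 \<le> k" "k \<le> card V"
  shows "k \<le> card {C \<in> components V w. bipartite_on w C}"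
proof -
  obtain P where P: "sub_bipartition V k P" "hbar V w k = hbar_val V w k P"
    using hbar_attained[OF assms(3)] .
  let ?S = "\<lambda>i. P (2*i - 1) \<union> P (2*i)"
  have "\<exists>C. C \<in> {C \<in> components V w. bipartite_on w C} \<and> C \<noteq> {} \<and> C \<subseteq> ?S i"
    if i: "i \<in> {1..k}" for i
  proof -
    have "1 \<le> phibar V w (P (2*i - 1)) (P (2*i))"
      using hbar_val_le_phibar[OF i, of V w P] P(2) assms(1) by simp
    then show ?thesis
      using bipartite_component_in_pair[OF sub_bipartitionD[OF P(1) i]] by blast
  qed
  then obtain C where C: "\<And>i. i \<in> {1..k} \<Longrightarrow>
      C i \<in> {C \<in> components V w. bipartite_on w C} \<and> C i \<noteq> {} \<and> C i \<subseteq> ?S i"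
    by metis
  have "inj_on C {1..k}"
  proof (rule inj_onI)
    fix i j assume ij: "i \<in> {1..k}" "j \<in> {1..k}" "C i = C j"
    then have "?S i \<inter> ?S j \<noteq> {}"
      using C by blast
    then show "i = j"
      using disjoint_family_k_pair_unions[OF P(1)] ij(1,2) unfolding disjoint_family_k_def by blast
  qed
  moreover have "C ` {1..k} \<subseteq> {C \<in> components V w. bipartite_on w C}"
    using C by blast
  moreover have "finite {C \<in> components V w. bipartite_on w C}"
    using finite_components[OF finite_V] by simp
  ultimately show ?thesis
    using card_inj_on_le by fastforce
qed

lemma hbar_eq_1_if_card_bipartite_components_ge:
  assumes "k \<le> card {C \<in> components V w. bipartite_on w C}" "1 \<le> k" "k \<le> card V"
  shows "hbar V w k = 1"
proof -
  obtain g where g: "g ` {1..k} \<subseteq> {C \<in> components V w. bipartite_on w C}" "inj_on g {1..k}"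
    using card_le_inj[of "{1..k}" "{C \<in> components V w. bipartite_on w C}"]
      finite_components[OF finite_V] assms(1) by auto
  have "disjoint_family_k V k g"
    using disjoint_family_k_components[OF weighted_graph _ g(2)] g(1) by blast
  then obtain P where P: "sub_bipartition V k P"
    "\<And>i. i \<in> {1..k} \<Longrightarrow> phibar V w (P (2*i - 1)) (P (2*i)) = 1 - phi V w (g i)"
    using sub_bipartition_of_bipartite_family g(1) by blast
  have phi: "phi V w (g i) = 0" if "i \<in> {1..k}" for i
  proof -
    have "g i \<in> components V w"
      using g(1) that by blast
    then show ?thesis
      unfolding phi_def by (simp add: cut_component_complement[OF weighted_graph])
  qed
  then have "1 \<le> phibar V w (P (2*i - 1)) (P (2*i))" if "i \<in> {1..k}" for i
    using P(2)[OF that] phi[OF that] by simp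
  then have "1 \<le> hbar_val V w k P"
    using le_hbar_val_iff[OF assms(2)] by blast
  then show ?thesis
    using hbar_val_le_hbar[OF P(1)] hbar_le_1_minus_h[OF assms(2,3)] h_nonneg[OF assms(2,3)]
    by linarith
qed

end

theorem proposition3p1:
  fixes V :: "'a set" and w :: "'a \<Rightarrow> 'a \<Rightarrow> real" and k :: nat
  assumes graph: "weighted_graph V w"
    and deg_pos: "\<forall>u\<in>V. deg V w u > 0"
    and k: "1 \<le> k" "k \<le> card V"
  shows "hbar V w k \<le> 1 - h V w k
    \<and> (hbar V w k = 1 \<longleftrightarrow> card {C \<in> components V w. bipartite_on w C} \<ge> k)
    \<and> (bipartite_on w V \<longrightarrow> h V w k + hbar V w k = 1)
    \<and> (h V w k + hbar V w k = 1 \<longrightarrow>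
         (\<forall>P i0. sub_bipartition V k P \<and> hbar_val V w k P = hbar V w k
            \<and> i0 \<in> {1..k}
            \<and> phi V w (P (2*i0 - 1) \<union> P (2*i0))
                = Max ((\<lambda>i. phi V w (P (2*i - 1) \<union> P (2*i))) ` {1..k})
            \<longrightarrow> cut w (P (2*i0 - 1)) (P (2*i0 - 1)) = 0
              \<and> cut w (P (2*i0)) (P (2*i0)) = 0))"
proof -
  interpret positive_weighted_graph V w
    using graph deg_pos by unfold_locales
  show ?thesis
    using hbar_le_1_minus_h[OF k] h_plus_hbar_eq_1_if_bipartite[OF _ k]
      card_bipartite_components_ge_if_hbar_eq_1[OF _ k] hbar_eq_1_if_card_bipartite_components_ge[OF _ k]
      inner_cuts_eq_0_if_h_plus_hbar_eq_1
    by blast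
qed

end
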